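(* Let $m,n$ be natural numbers with $m>2$, $n>1$ and $n\ge m-1$, and let $\mathcal X$ be a semigroup variety with $\mathcal X\subseteq\mathcal D_m$. Then $\mathcal A_n\vee\mathcal X=\mathcal A_n\vee\operatorname{ZR}(\mathcal X)$.
   Context: $\operatorname{var}\Sigma$ denotes the semigroup variety defined by identities $\Sigma$. For a word $w$ and a letter $x$ not occurring in $w$, the symbolic identity $w=0$ stands for the pair $wx=xw=w$. $\mathcal A_n=\operatorname{var}\{x^ny=y,\ xy=yx\}$, $\mathcal D_m=\operatorname{var}\{x^m=0,\ xy=yx\}$. $\mathcal{COM}$ is the variety of all commutative semigroups. Identities of the form $w=0$ are called 0-reduced; a commutative variety is 0-reduced in $\mathbf{Com}$ if it is defined within $\mathcal{COM}$ by 0-reduced identities only. For a commutative nil-variety $\mathcal X$, $\operatorname{ZR}(\mathcal X)$ is the least variety 0-reduced in $\mathbf{Com}$ containing $\mathcal X$, i.e. the variety defined within $\mathcal{COM}$ by all 0-reduced identities holding in $\mathcal X$. *)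

theory Defs
  imports Main
begin

text \<open>Semigroup words over the countable alphabet of letters nat: nonempty lists
  (the free semigroup; associativity is built in).
  A semigroup variety is represented by its equational theory (a fully invariant
  congruence on the free semigroup); by Birkhoff's theorem this is an
  order-reversing bijection, so inclusion of varieties is reverse inclusion of
  theories and the join of varieties corresponds to intersection of theories.\<close>

type_synonym word = "nat list"
type_synonym ident = "word \<times> word"

definition subst :: "(nat \<Rightarrow> word) \<Rightarrow> word \<Rightarrow> word" where
  "subst \<sigma> w = concat (map \<sigma> w)"

text \<open>Equational (Birkhoff) closure: the set of all identities derivable from Sigma,
  i.e. the equational theory of the variety var Sigma.\<close>
inductive_set eq_closure :: "ident set \<Rightarrow> ident set" for \<Sigma> :: "ident set" where
  base: "(u, v) \<in> \<Sigma> \<Longrightarrow> (u, v) \<in> eq_closure \<Sigma>"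
| refl: "w \<noteq> [] \<Longrightarrow> (w, w) \<in> eq_closure \<Sigma>"
| sym: "(u, v) \<in> eq_closure \<Sigma> \<Longrightarrow> (v, u) \<in> eq_closure \<Sigma>"
| trans: "(u, v) \<in> eq_closure \<Sigma> \<Longrightarrow> (v, w) \<in> eq_closure \<Sigma> \<Longrightarrow> (u, w) \<in> eq_closure \<Sigma>"
| mult: "(u, v) \<in> eq_closure \<Sigma> \<Longrightarrow> (u', v') \<in> eq_closure \<Sigma> \<Longrightarrow> (u @ u', v @ v') \<in> eq_closure \<Sigma>"
| substI: "(u, v) \<in> eq_closure \<Sigma> \<Longrightarrow> (\<forall>i. \<sigma> i \<noteq> []) \<Longrightarrow> (subst \<sigma> u, subst \<sigma> v) \<in> eq_closure \<Sigma>"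

definition equational_theory :: "ident set \<Rightarrow> bool" where
  "equational_theory E \<longleftrightarrow> E \<subseteq> {(u, v). u \<noteq> [] \<and> v \<noteq> []} \<and> eq_closure E = E"

abbreviation Th_var :: "ident set \<Rightarrow> ident set" where
  "Th_var \<Sigma> \<equiv> eq_closure \<Sigma>"

text \<open>Letters x = 0, y = 1.\<close>
definition comm_id :: ident where
  "comm_id = ([0, 1], [1, 0])"

text \<open>The symbolic identity w = 0 (with a letter x not in w) stands for wx = w and xw = w.\<close>
definition zero_ids :: "word \<Rightarrow> nat \<Rightarrow> ident set" where
  "zero_ids w x = {(w @ [x], w), (x # w, w)}"

definition Th_A :: "nat \<Rightarrow> ident set" where
  "Th_A n = Th_var {(replicate n 0 @ [1], [1]), comm_id}"

definition Th_D :: "nat \<Rightarrow> ident set" where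
  "Th_D m = Th_var ({comm_id} \<union> zero_ids (replicate m 0) 1)"

definition var_le :: "ident set \<Rightarrow> ident set \<Rightarrow> bool" where
  "var_le E1 E2 \<longleftrightarrow> E2 \<subseteq> E1"

definition var_join :: "ident set \<Rightarrow> ident set \<Rightarrow> ident set" where
  "var_join E1 E2 = E1 \<inter> E2"

text \<open>ZR(X): the variety defined within COM by all 0-reduced identities holding in X.\<close>
definition Th_ZR :: "ident set \<Rightarrow> ident set" where
  "Th_ZR E = Th_var ({comm_id} \<union>
      \<Union>{zero_ids w x | w x. w \<noteq> [] \<and> x \<notin> set w \<and> zero_ids w x \<subseteq> E})"

end

theory Submission
  imports Defs "HOL-Library.Multiset"
begin

text \<open>As \<open>\<X> \<subseteq> ZR(\<X>)\<close>, it suffices to show that every identity \<open>u = v\<close> of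
  \<open>\<A>\<^sub>n \<or> \<X>\<close> holds in \<open>ZR(\<X>)\<close>. If \<open>u\<close> and \<open>v\<close> have the same content this follows from
  commutativity. Otherwise, since \<open>\<A>\<^sub>n\<close> preserves the number of occurrences of each
  letter modulo \<open>n\<close>, some letter \<open>x\<close> occurs at least \<open>n \<ge> m - 1\<close> more times on one
  side. Using \<open>x\<^sup>m = 0\<close> (after substituting \<open>x \<mapsto> x\<^sup>m\<close> if \<open>x\<close> is absent from the other
  side), both \<open>u\<close> and \<open>v\<close> are zero words of \<open>\<X>\<close>. Zero words are expressed by
  0-reduced identities, so \<open>u = 0 = v\<close> holds in \<open>ZR(\<X>)\<close>.\<close>

lemma subst_Nil [simp]: "subst \<sigma> [] = []"
  by (simp add: subst_def)

lemma subst_Cons [simp]: "subst \<sigma> (a # w) = \<sigma> a @ subst \<sigma> w"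
  by (simp add: subst_def)

lemma subst_append [simp]: "subst \<sigma> (u @ w) = subst \<sigma> u @ subst \<sigma> w"
  by (simp add: subst_def)

lemma subst_replicate [simp]: "subst \<sigma> (replicate k a) = concat (replicate k (\<sigma> a))"
  by (induction k) auto

lemma subst_eq_self: "(\<And>i. i \<in> set w \<Longrightarrow> \<sigma> i = [i]) \<Longrightarrow> subst \<sigma> w = w"
  by (induction w) auto

lemma sum_list_map_subst:
  "sum_list (map f (subst \<sigma> w)) = sum_list (map (\<lambda>i. sum_list (map f (\<sigma> i))) w)"
  by (induction w) auto

lemma count_mset_subst_replicate:
  "count (mset (subst (\<lambda>i. if i = x then replicate k x else [i]) w)) x = k * count (mset w) x"
  by (induction w) auto

lemma eq_closure_mono:
  assumes "(u, v) \<in> eq_closure S" "S \<subseteq> T"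
  shows "(u, v) \<in> eq_closure T"
  using assms(1)
proof (induction rule: eq_closure.induct)
  case (base u v)
  then show ?case using assms(2) by (auto intro: eq_closure.base)
next
  case (refl w)
  then show ?case by (rule eq_closure.refl)
next
  case (sym u v)
  from sym.IH show ?case by (rule eq_closure.sym)
next
  case (trans u v w)
  from trans.IH show ?case by (rule eq_closure.trans)
next
  case (mult u v u' v')
  from mult.IH show ?case by (rule eq_closure.mult)
next
  case (substI u v \<sigma>)
  from substI.IH substI.hyps(2) show ?case by (rule eq_closure.substI)
qed

lemma eq_closure_subset:
  assumes "S \<subseteq> E" "eq_closure E = E"
  shows "eq_closure S \<subseteq> E"
proof (rule subrelI)
  fix u v
  assume "(u, v) \<in> eq_closure S"
  then show "(u, v) \<in> E" using eq_closure_mono[of u v S E] assms by simp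
qed

lemma eq_closure_trans' [trans]:
  "(u, v) \<in> eq_closure S \<Longrightarrow> (v, w) \<in> eq_closure S \<Longrightarrow> (u, w) \<in> eq_closure S"
  by (rule eq_closure.trans)

lemma Th_A_weight_mod:
  assumes "(u, v) \<in> Th_A n"
  shows "\<forall>f :: nat \<Rightarrow> int. sum_list (map f u) mod int n = sum_list (map f v) mod int n"
  using assms unfolding Th_A_def
proof (induction rule: eq_closure.induct)
  case (base u v)
  then show ?case by (auto simp: comm_id_def map_replicate sum_list_replicate add.commute)
next
  case (sym u v)
  then show ?case by simp
next
  case (trans u v w)
  then show ?case by simp
next
  case (mult u v u' v')
  show ?case
  proof
    fix f :: "nat \<Rightarrow> int"
    show "sum_list (map f (u @ u')) mod int n = sum_list (map f (v @ v')) mod int n"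
      using mod_add_cong[OF mult.IH[rule_format, of f]] by simp
  qed
next
  case (substI u v \<sigma>)
  show ?case
  proof
    fix f :: "nat \<Rightarrow> int"
    show "sum_list (map f (subst \<sigma> u)) mod int n = sum_list (map f (subst \<sigma> v)) mod int n"
      using substI.IH[rule_format, of "\<lambda>i. sum_list (map f (\<sigma> i))"]
      by (simp add: sum_list_map_subst)
  qed
qed simp

lemma Th_A_count_dvd:
  assumes "(u, v) \<in> Th_A n"
  shows "int n dvd int (count (mset u) x) - int (count (mset v) x)"
proof -
  have count_as_sum: "sum_list (map (\<lambda>y. if y = x then 1 else 0) w) = int (count (mset w) x)"
    for w :: word
    by (induction w) auto
  show ?thesis
    using Th_A_weight_mod[OF assms, rule_format, of "\<lambda>y. if y = x then 1 else 0"]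
    by (simp add: count_as_sum mod_eq_dvd_iff)
qed

lemma eq_closure_swap:
  assumes "comm_id \<in> S" "u \<noteq> []" "v \<noteq> []"
  shows "(u @ v, v @ u) \<in> eq_closure S"
proof -
  define \<sigma> where "\<sigma> = (\<lambda>i::nat. if i = 0 then u else if i = 1 then v else [0])"
  have "([0, 1], [1, 0]) \<in> eq_closure S"
    using assms(1) by (auto simp: comm_id_def intro: eq_closure.base)
  then have "(subst \<sigma> [0, 1], subst \<sigma> [1, 0]) \<in> eq_closure S"
    by (rule eq_closure.substI) (use assms in \<open>auto simp: \<sigma>_def\<close>)
  then show ?thesis by (simp add: \<sigma>_def)
qed

lemma eq_closure_Cons_swap:
  assumes "comm_id \<in> S"
  shows "(a # v1 @ v2, v1 @ a # v2) \<in> eq_closure S"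
proof (cases "v1 = []")
  case True
  then show ?thesis by (auto intro: eq_closure.refl)
next
  case False
  have swap: "([a] @ v1, v1 @ [a]) \<in> eq_closure S"
    using eq_closure_swap[OF assms, of "[a]" v1] False by simp
  show ?thesis
  proof (cases "v2 = []")
    case True
    then show ?thesis using swap by simp
  next
    case False
    show ?thesis using eq_closure.mult[OF swap eq_closure.refl[OF False]] by simp
  qed
qed

lemma eq_closure_perm:
  assumes "comm_id \<in> S" "mset u = mset v" "u \<noteq> []"
  shows "(u, v) \<in> eq_closure S"
  using assms(2,3)
proof (induction u arbitrary: v)
  case Nil
  then show ?case by simp
next
  case (Cons a u)
  have "a \<in> set v" using Cons.prems(1) by (metis list.set_intros(1) set_mset_mset)
  then obtain v1 v2 where v: "v = v1 @ a # v2" by (meson split_list)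
  have same_rest: "mset u = mset (v1 @ v2)" using Cons.prems(1) v by simp
  show ?case
  proof (cases "u = []")
    case True
    then show ?thesis using v same_rest by (auto intro: eq_closure.refl)
  next
    case False
    have "(a # u, a # v1 @ v2) \<in> eq_closure S"
      using eq_closure.mult[OF eq_closure.refl[of "[a]"] Cons.IH[OF same_rest False]] by simp
    then show ?thesis
      using eq_closure.trans[OF _ eq_closure_Cons_swap[OF assms(1)]] v by simp
  qed
qed

text \<open>Zero words \<open>w\<close> of \<open>var S\<close>: \<open>w t = w\<close> for every word \<open>t\<close>. In the presence of
  commutativity this is the symbolic identity \<open>w = 0\<close>.\<close>
definition absorbing :: "ident set \<Rightarrow> word \<Rightarrow> bool" where
  "absorbing S w \<longleftrightarrow> w \<noteq> [] \<and> (\<forall>t. t \<noteq> [] \<longrightarrow> (w @ t, w) \<in> eq_closure S)"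

lemma absorbing_eq_closure:
  assumes "(u, v) \<in> eq_closure S" "absorbing S v" "u \<noteq> []"
  shows "absorbing S u"
  unfolding absorbing_def
proof (intro conjI allI impI)
  fix t :: word
  assume t: "t \<noteq> []"
  have "(u @ t, v @ t) \<in> eq_closure S" using eq_closure.mult[OF assms(1) eq_closure.refl[OF t]] .
  also have "(v @ t, v) \<in> eq_closure S" using assms(2) t by (simp add: absorbing_def)
  also have "(v, u) \<in> eq_closure S" using eq_closure.sym[OF assms(1)] .
  finally show "(u @ t, u) \<in> eq_closure S" .
qed (rule assms(3))

lemma absorbing_append:
  assumes "absorbing S w"
  shows "absorbing S (w @ r)"
proof (cases "r = []")
  case False
  then have "(w @ r, w) \<in> eq_closure S" using assms by (simp add: absorbing_def)
  then show ?thesis using absorbing_eq_closure[OF _ assms] False by simp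
qed (use assms in simp)

lemma absorbing_eq:
  assumes "comm_id \<in> S" "absorbing S u" "absorbing S v"
  shows "(u, v) \<in> eq_closure S"
proof -
  have "u \<noteq> []" "v \<noteq> []" using assms(2,3) by (auto simp: absorbing_def)
  have "(u, u @ v) \<in> eq_closure S"
    using assms(2) \<open>v \<noteq> []\<close> by (simp add: absorbing_def eq_closure.sym)
  also have "(u @ v, v @ u) \<in> eq_closure S" using eq_closure_swap[OF assms(1)] \<open>u \<noteq> []\<close> \<open>v \<noteq> []\<close> .
  also have "(v @ u, v) \<in> eq_closure S" using assms(3) \<open>u \<noteq> []\<close> by (simp add: absorbing_def)
  finally show ?thesis .
qed

lemma zero_ids_absorbing:
  assumes "comm_id \<in> S" "absorbing S w"
  shows "zero_ids w x \<subseteq> eq_closure S"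
proof -
  have right: "(w @ [x], w) \<in> eq_closure S" using assms(2) by (simp add: absorbing_def)
  have "([x] @ w, w @ [x]) \<in> eq_closure S"
    using eq_closure_swap[OF assms(1), of "[x]" w] assms(2) by (simp add: absorbing_def)
  then have "(x # w, w) \<in> eq_closure S" using eq_closure.trans[OF _ right] by simp
  then show ?thesis using right by (simp add: zero_ids_def)
qed

lemma absorbing_zero_ids:
  assumes "zero_ids w x \<subseteq> eq_closure S" "x \<notin> set w" "w \<noteq> []"
  shows "absorbing S w"
  unfolding absorbing_def
proof (intro conjI allI impI)
  fix t :: word
  assume t: "t \<noteq> []"
  define \<sigma> where "\<sigma> = (\<lambda>i. if i = x then t else [i])"
  have "(w @ [x], w) \<in> eq_closure S" using assms(1) by (simp add: zero_ids_def)
  then have "(subst \<sigma> (w @ [x]), subst \<sigma> w) \<in> eq_closure S"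
    by (rule eq_closure.substI) (use t in \<open>auto simp: \<sigma>_def\<close>)
  moreover have "subst \<sigma> w = w" using assms(2) by (intro subst_eq_self) (auto simp: \<sigma>_def)
  ultimately show "(w @ t, w) \<in> eq_closure S" by (simp add: \<sigma>_def)
qed (rule assms(3))

lemma absorbing_replicate:
  assumes "zero_ids (replicate m 0) 1 \<subseteq> S" "m \<ge> 1"
  shows "absorbing S (replicate m x)"
  unfolding absorbing_def
proof (intro conjI allI impI)
  fix t :: word
  assume t: "t \<noteq> []"
  define \<sigma> where "\<sigma> = (\<lambda>i::nat. if i = 0 then [x] else t)"
  have "(replicate m 0 @ [1], replicate m 0) \<in> eq_closure S"
    using assms(1) by (auto simp: zero_ids_def intro: eq_closure.base)
  then have "(subst \<sigma> (replicate m 0 @ [1]), subst \<sigma> (replicate m 0)) \<in> eq_closure S"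
    by (rule eq_closure.substI) (use t in \<open>auto simp: \<sigma>_def\<close>)
  moreover have "concat (replicate m [x]) = replicate m x" by (induction m) auto
  ultimately show "(replicate m x @ t, replicate m x) \<in> eq_closure S" by (simp add: \<sigma>_def)
qed (use assms(2) in simp)

lemma absorbing_count_ge:
  assumes "comm_id \<in> S" "zero_ids (replicate m 0) 1 \<subseteq> S" "m \<ge> 1"
    and "count (mset w) x \<ge> m"
  shows "absorbing S w"
proof -
  obtain r where r: "mset r = mset w - replicate_mset m x" using ex_mset by blast
  have "replicate_mset m x \<subseteq># mset w" using assms(4) by (simp add: subseteq_mset_def)
  then have "mset w = mset (replicate m x @ r)" using r by (simp add: subset_mset.add_diff_inverse)
  moreover have "w \<noteq> []" using assms(3,4) by auto
  ultimately have "(w, replicate m x @ r) \<in> eq_closure S"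
    using eq_closure_perm[OF assms(1)] by blast
  moreover have "absorbing S (replicate m x @ r)"
    using absorbing_append absorbing_replicate[OF assms(2,3)] by blast
  ultimately show ?thesis using absorbing_eq_closure \<open>w \<noteq> []\<close> by blast
qed

lemma absorbing_count_gap:
  assumes "comm_id \<in> S" "zero_ids (replicate m 0) 1 \<subseteq> S"
    and "m \<ge> 1" "n \<ge> 1" "n \<ge> m - 1"
    and "(u, v) \<in> eq_closure S" "u \<noteq> []" "v \<noteq> []"
    and gap: "count (mset v) x \<ge> count (mset u) x + n"
  shows "absorbing S u \<and> absorbing S v"
proof (cases "x \<in> set u")
  case True
  then have "count (mset u) x \<ge> 1" by (simp add: Suc_le_eq)
  then have "count (mset v) x \<ge> m" using assms(5) gap by linarith
  then have "absorbing S v" using absorbing_count_ge[OF assms(1-3)] by blast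
  then show ?thesis using absorbing_eq_closure assms(6,7) by blast
next
  case False
  text \<open>Substituting \<open>x \<mapsto> x\<^sup>m\<close> leaves \<open>u\<close> fixed but makes \<open>x\<close> occur \<open>m\<close> times in \<open>v\<close>.\<close>
  define \<sigma> where "\<sigma> = (\<lambda>i. if i = x then replicate m x else [i])"
  have "(subst \<sigma> u, subst \<sigma> v) \<in> eq_closure S"
    using assms(6) by (rule eq_closure.substI) (use assms(3) in \<open>auto simp: \<sigma>_def\<close>)
  moreover have "subst \<sigma> u = u" using False by (intro subst_eq_self) (auto simp: \<sigma>_def)
  ultimately have u_eq: "(u, subst \<sigma> v) \<in> eq_closure S" by simp
  have "count (mset v) x \<ge> 1" using assms(4) gap by linarith
  then have "count (mset (subst \<sigma> v)) x \<ge> m"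
    unfolding \<sigma>_def count_mset_subst_replicate by simp
  then have "absorbing S u"
    using absorbing_count_ge[OF assms(1-3)] absorbing_eq_closure[OF u_eq] assms(7) by blast
  then show ?thesis using absorbing_eq_closure eq_closure.sym[OF assms(6)] assms(8) by blast
qed

lemma Th_ZR_subset:
  assumes "equational_theory X" "comm_id \<in> X"
  shows "Th_ZR X \<subseteq> X"
  unfolding Th_ZR_def
  by (rule eq_closure_subset) (use assms in \<open>auto simp: equational_theory_def\<close>)

lemma Th_ZR_absorbing_eq:
  assumes "equational_theory X" "comm_id \<in> X" "absorbing X u" "absorbing X v"
  shows "(u, v) \<in> Th_ZR X"
proof -
  define G where "G = {comm_id} \<union>
    \<Union>{zero_ids w x | w x. w \<noteq> [] \<and> x \<notin> set w \<and> zero_ids w x \<subseteq> X}"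
  have X_closed: "eq_closure X = X" using assms(1) by (simp add: equational_theory_def)
  have "absorbing G w" if "absorbing X w" for w
  proof -
    have "w \<noteq> []" using that by (simp add: absorbing_def)
    obtain x :: nat where x: "x \<notin> set w" using ex_new_if_finite[OF infinite_UNIV_nat] by blast
    have "zero_ids w x \<subseteq> X" using zero_ids_absorbing[OF assms(2) that] X_closed by simp
    then have "zero_ids w x \<subseteq> G" using \<open>w \<noteq> []\<close> x unfolding G_def by blast
    then have "zero_ids w x \<subseteq> eq_closure G" by (auto intro: eq_closure.base)
    then show ?thesis using absorbing_zero_ids x \<open>w \<noteq> []\<close> by blast
  qed
  moreover have "comm_id \<in> G" by (simp add: G_def)
  ultimately have "(u, v) \<in> eq_closure G" using absorbing_eq assms(3,4) by blast
  then show ?thesis by (simp add: Th_ZR_def G_def)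
qed

lemma Th_ZR_perm:
  assumes "mset u = mset v" "u \<noteq> []"
  shows "(u, v) \<in> Th_ZR X"
  unfolding Th_ZR_def using assms by (intro eq_closure_perm) simp_all

lemma absorbing_if_Th_A_content_differs:
  assumes "comm_id \<in> X" "zero_ids (replicate m 0) 1 \<subseteq> X" "eq_closure X = X"
    and "m \<ge> 1" "n \<ge> 1" "n \<ge> m - 1"
    and "(u, v) \<in> Th_A n" "(u, v) \<in> X" "u \<noteq> []" "v \<noteq> []"
    and "mset u \<noteq> mset v"
  shows "absorbing X u \<and> absorbing X v"
proof -
  obtain x where x: "count (mset u) x \<noteq> count (mset v) x"
    using assms(11) by (meson multiset_eqI)
  have "int n dvd int (count (mset u) x) - int (count (mset v) x)"
    using Th_A_count_dvd[OF assms(7)] .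
  then have "\<bar>int n\<bar> \<le> \<bar>int (count (mset u) x) - int (count (mset v) x)\<bar>"
    using x by (intro dvd_imp_le_int) auto
  then consider "count (mset v) x \<ge> count (mset u) x + n"
    | "count (mset u) x \<ge> count (mset v) x + n"
    by linarith
  then show ?thesis
  proof cases
    case 1
    then show ?thesis using absorbing_count_gap[OF assms(1,2,4-6)] assms(3,8-10) by simp
  next
    case 2
    have "(v, u) \<in> eq_closure X" using eq_closure.sym[of u v X] assms(3,8) by simp
    then show ?thesis using absorbing_count_gap[OF assms(1,2,4-6)] assms(9,10) 2 by blast
  qed
qed

lemma comm_id_in_Th_D: "comm_id \<in> Th_D m"
  unfolding Th_D_def comm_id_def by (rule eq_closure.base) simp

lemma zero_ids_in_Th_D: "zero_ids (replicate m 0) 1 \<subseteq> Th_D m"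
  unfolding Th_D_def by (auto intro: eq_closure.base)

theorem mainTheorem4:
  fixes m n :: nat and X :: "ident set"
  assumes "m > 2" and "n > 1" and "n \<ge> m - 1"
    and "equational_theory X"
    and "var_le X (Th_D m)"
  shows "var_join (Th_A n) X = var_join (Th_A n) (Th_ZR X)"
proof -
  have comm: "comm_id \<in> X" and nil: "zero_ids (replicate m 0) 1 \<subseteq> X"
    using assms(5) comm_id_in_Th_D zero_ids_in_Th_D by (auto simp: var_le_def)
  have closed: "eq_closure X = X" and nonempty: "X \<subseteq> {(u, v). u \<noteq> [] \<and> v \<noteq> []}"
    using assms(4) by (auto simp: equational_theory_def)
  have "(u, v) \<in> Th_ZR X" if "(u, v) \<in> Th_A n" "(u, v) \<in> X" for u v
  proof (cases "mset u = mset v")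
    case True
    then show ?thesis using Th_ZR_perm that(2) nonempty by blast
  next
    case False
    then show ?thesis
      using absorbing_if_Th_A_content_differs[OF comm nil closed _ _ assms(3) that]
        Th_ZR_absorbing_eq[OF assms(4) comm] that(2) nonempty assms(1,2) by auto
  qed
  then show ?thesis
    using Th_ZR_subset[OF assms(4) comm] by (auto simp: var_join_def)
qed

end
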